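(* Let $0\le t_d\le t_f$ be integers, let $f:\mathbb{F}_q^k\to\{0,1,\dots,k\}$ be the Hamming weight function $f(u)=\mathrm{wt}(u)$, and suppose there exists a systematic $[n,k,2t_d+1]$ linear code over $\mathbb{F}_q$. Then $$r_f(k,t_d,t_f)\le n-k+N(2t_f+1,2(t_f-t_d)).$$
   Context: $d(\cdot,\cdot)$ is Hamming distance and $\mathrm{wt}$ the number of nonzero entries. $N(\lambda,d)$ is the minimum length of a $q$-ary code with $\lambda$ codewords and minimum distance at least $d$ (with $N(\lambda,0)=0$). An $(f,t_d,t_f)$-FCC with redundancy $r$ is a systematic encoding $u\mapsto(u,p_u)\in\mathbb{F}_q^{k+r}$ whose images are at distance $\ge 2t_d+1$ for distinct messages and $\ge 2t_f+1$ for messages with different $f$-values; $r_f(k,t_d,t_f)$ is the minimum such $r$. *)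

theory Defs
  imports Main
begin

text \<open>Vectors in F_q^n are lists of length n over a finite field 'a.\<close>

definition hdist :: "'a list \<Rightarrow> 'a list \<Rightarrow> nat" where
  "hdist x y = card {i. i < length x \<and> x ! i \<noteq> y ! i}"

definition wt :: "'a::zero list \<Rightarrow> nat" where
  "wt u = card {i. i < length u \<and> u ! i \<noteq> 0}"

definition N_code :: "'a itself \<Rightarrow> nat \<Rightarrow> nat \<Rightarrow> nat" where
  "N_code _ lam d = (if d = 0 then 0 else
     (LEAST n. \<exists>c :: nat \<Rightarrow> 'a list.
        (\<forall>i<lam. length (c i) = n) \<and>
        (\<forall>i<lam. \<forall>j<lam. i \<noteq> j \<longrightarrow> d \<le> hdist (c i) (c j))))"

definition is_FCC :: "('a list \<Rightarrow> 'b) \<Rightarrow> nat \<Rightarrow> nat \<Rightarrow> nat \<Rightarrow> nat \<Rightarrow> ('a list \<Rightarrow> 'a list) \<Rightarrow> bool" where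
  "is_FCC f k td tf r p \<longleftrightarrow>
     (\<forall>u. length u = k \<longrightarrow> length (p u) = r) \<and>
     (\<forall>u v. length u = k \<longrightarrow> length v = k \<longrightarrow> u \<noteq> v \<longrightarrow>
        2 * td + 1 \<le> hdist (u @ p u) (v @ p v)) \<and>
     (\<forall>u v. length u = k \<longrightarrow> length v = k \<longrightarrow> f u \<noteq> f v \<longrightarrow>
        2 * tf + 1 \<le> hdist (u @ p u) (v @ p v))"

definition r_f :: "('a list \<Rightarrow> 'b) \<Rightarrow> nat \<Rightarrow> nat \<Rightarrow> nat \<Rightarrow> nat" where
  "r_f f k td tf = (LEAST r. \<exists>p. is_FCC f k td tf r p)"

text \<open>Systematic linear encoder with generator matrix [I_k | P], P a k x (n-k) matrix.\<close>
definition sys_enc :: "(nat \<Rightarrow> nat \<Rightarrow> 'a::comm_semiring_1) \<Rightarrow> nat \<Rightarrow> nat \<Rightarrow> 'a list \<Rightarrow> 'a list" where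
  "sys_enc P k n u = u @ map (\<lambda>j. \<Sum>i<k. u ! i * P i j) [0..<n - k]"

end

theory Submission
  imports Defs
begin

text \<open>Append to the systematic codeword of u a codeword of an auxiliary code with 2 t_f + 1 words,
  indexed by wt u mod (2 t_f + 1). Since the weights of two words differ by at most their distance,
  messages of different weight with the same residue are already 2 t_f + 1 apart; messages with
  different residues gain 2 (t_f - t_d) from the auxiliary code on top of the 2 t_d + 1 of the linear code.\<close>

lemma hdist_commute: "length u = length v \<Longrightarrow> hdist u v = hdist v u"
  unfolding hdist_def by metis

lemma hdist_append:
  assumes "length xs = length xs'"
  shows "hdist (xs @ ys) (xs' @ ys') = hdist xs xs' + hdist ys ys'"
proof -
  let ?A = "{i. i < length xs \<and> xs ! i \<noteq> xs' ! i}"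
  let ?B = "{i. i < length ys \<and> ys ! i \<noteq> ys' ! i}"
  have "{i. i < length (xs @ ys) \<and> (xs @ ys) ! i \<noteq> (xs' @ ys') ! i}
      = ?A \<union> (\<lambda>i. i + length xs) ` ?B"
  proof (rule set_eqI)
    fix i
    show "i \<in> {i. i < length (xs @ ys) \<and> (xs @ ys) ! i \<noteq> (xs' @ ys') ! i}
        \<longleftrightarrow> i \<in> ?A \<union> (\<lambda>i. i + length xs) ` ?B"
      using assms by (cases "i < length xs") (auto simp: nth_append image_iff intro: exI[of _ "i - length xs"])
  qed
  moreover have "card (?A \<union> (\<lambda>i. i + length xs) ` ?B) = card ?A + card ((\<lambda>i. i + length xs) ` ?B)"
    by (rule card_Un_disjoint) auto
  moreover have "card ((\<lambda>i. i + length xs) ` ?B) = card ?B"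
    by (rule card_image) (auto simp: inj_on_def)
  ultimately show ?thesis
    unfolding hdist_def by simp
qed

lemma hdist_le_hdist_append:
  "length u = length v \<Longrightarrow> hdist u v \<le> hdist (u @ x) (v @ y)"
  by (simp add: hdist_append)

lemma wt_le_wt_add_hdist:
  fixes u v :: "'a::zero list"
  assumes "length u = length v"
  shows "wt u \<le> wt v + hdist u v"
proof -
  have "{i. i < length u \<and> u ! i \<noteq> 0}
      \<subseteq> {i. i < length v \<and> v ! i \<noteq> 0} \<union> {i. i < length u \<and> u ! i \<noteq> v ! i}"
    using assms by auto
  hence "wt u \<le> card ({i. i < length v \<and> v ! i \<noteq> 0} \<union> {i. i < length u \<and> u ! i \<noteq> v ! i})"
    unfolding wt_def by (intro card_mono) auto
  also have "\<dots> \<le> wt v + hdist u v"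
    unfolding wt_def hdist_def by (rule card_Un_le)
  finally show ?thesis .
qed

lemma mod_eq_less_imp_le_diff:
  fixes a b M :: nat
  assumes "a mod M = b mod M" and "a < b"
  shows "M \<le> b - a"
proof -
  have "M dvd b - a"
    using assms by (metis less_or_eq_imp_le mod_eq_dvd_iff_nat)
  thus ?thesis
    using assms(2) by (intro dvd_imp_le) auto
qed

lemma wt_mod_eq_imp_le_hdist:
  fixes u v :: "'a::zero list"
  assumes "length u = length v" and "wt u \<noteq> wt v" and "wt u mod M = wt v mod M"
  shows "M \<le> hdist u v"
  using assms mod_eq_less_imp_le_diff[of "wt u" M "wt v"] mod_eq_less_imp_le_diff[of "wt v" M "wt u"]
    wt_le_wt_add_hdist[of u v] wt_le_wt_add_hdist[of v u] hdist_commute[of u v]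
  by (cases "wt u < wt v") auto

lemma exists_code_min_dist:
  "\<exists>L. \<exists>c :: nat \<Rightarrow> 'a::zero_neq_one list.
     (\<forall>i<lam. length (c i) = L) \<and> (\<forall>i<lam. \<forall>j<lam. i \<noteq> j \<longrightarrow> d \<le> hdist (c i) (c j))"
proof -
  define c :: "nat \<Rightarrow> 'a list" where
    "c i = map (\<lambda>l. if l div d = i then 1 else 0) [0..<lam * d]" for i
  have "d \<le> hdist (c i) (c j)" if "i < lam" "i \<noteq> j" for i j
  proof -
    have "{i * d..<i * d + d} \<subseteq> {l. l < length (c i) \<and> c i ! l \<noteq> c j ! l}"
    proof
      fix l assume l: "l \<in> {i * d..<i * d + d}"
      hence "l div d = i"
        by (intro div_nat_eqI) (auto simp: algebra_simps)
      moreover have "i * d + d \<le> lam * d"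
        using \<open>i < lam\<close> by (metis Suc_leI mult_Suc mult_le_mono1 add.commute)
      ultimately show "l \<in> {l. l < length (c i) \<and> c i ! l \<noteq> c j ! l}"
        using l \<open>i \<noteq> j\<close> by (auto simp: c_def)
    qed
    hence "card {i * d..<i * d + d} \<le> hdist (c i) (c j)"
      unfolding hdist_def by (rule card_mono[rotated]) auto
    thus ?thesis by simp
  qed
  thus ?thesis
    by (intro exI[of _ "lam * d"] exI[of _ c]) (simp add: c_def)
qed

lemma N_code_attained:
  "\<exists>c :: nat \<Rightarrow> 'a::zero_neq_one list.
     (\<forall>i<lam. length (c i) = N_code TYPE('a) lam d) \<and>
     (\<forall>i<lam. \<forall>j<lam. i \<noteq> j \<longrightarrow> d \<le> hdist (c i) (c j))"
proof (cases "d = 0")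
  case True
  thus ?thesis by (intro exI[of _ "\<lambda>_. []"]) (simp add: N_code_def)
next
  case False
  thus ?thesis
    using LeastI_ex[OF exists_code_min_dist[where 'a='a and lam=lam and d=d]]
    by (simp add: N_code_def)
qed

lemma r_f_le: "is_FCC f k td tf r p \<Longrightarrow> r_f f k td tf \<le> r"
  unfolding r_f_def by (rule Least_le) blast

lemma is_FCC_wt_append_code:
  fixes par :: "'a::zero list \<Rightarrow> 'a list" and c :: "nat \<Rightarrow> 'a list"
  assumes "td \<le> tf"
    and par_len: "\<And>u. length u = k \<Longrightarrow> length (par u) = r"
    and par_dist: "\<And>u v. length u = k \<Longrightarrow> length v = k \<Longrightarrow> u \<noteq> v \<Longrightarrow>
                     2 * td + 1 \<le> hdist (u @ par u) (v @ par v)"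
    and c_len: "\<And>i. i < 2 * tf + 1 \<Longrightarrow> length (c i) = m"
    and c_dist: "\<And>i j. i < 2 * tf + 1 \<Longrightarrow> j < 2 * tf + 1 \<Longrightarrow> i \<noteq> j \<Longrightarrow>
                   2 * (tf - td) \<le> hdist (c i) (c j)"
  shows "is_FCC wt k td tf (r + m) (\<lambda>u. par u @ c (wt u mod (2 * tf + 1)))"
proof -
  let ?M = "2 * tf + 1"
  have split: "hdist (u @ par u @ c (wt u mod ?M)) (v @ par v @ c (wt v mod ?M))
      = hdist (u @ par u) (v @ par v) + hdist (c (wt u mod ?M)) (c (wt v mod ?M))"
    if "length u = k" "length v = k" for u v
    using hdist_append[of "u @ par u" "v @ par v"] that by (simp add: par_len)
  show ?thesis
    unfolding is_FCC_def
  proof (intro conjI allI impI)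
    fix u :: "'a list" assume "length u = k"
    thus "length (par u @ c (wt u mod ?M)) = r + m" by (simp add: par_len c_len)
  next
    fix u v :: "'a list" assume uv: "length u = k" "length v = k" "u \<noteq> v"
    thus "2 * td + 1 \<le> hdist (u @ par u @ c (wt u mod ?M)) (v @ par v @ c (wt v mod ?M))"
      using par_dist[OF uv] split[OF uv(1,2)] by linarith
  next
    fix u v :: "'a list" assume uv: "length u = k" "length v = k" "wt u \<noteq> wt v"
    show "2 * tf + 1 \<le> hdist (u @ par u @ c (wt u mod ?M)) (v @ par v @ c (wt v mod ?M))"
    proof (cases "wt u mod ?M = wt v mod ?M")
      case True
      hence "?M \<le> hdist u v" using uv by (intro wt_mod_eq_imp_le_hdist) auto
      also have "\<dots> \<le> hdist (u @ par u @ c (wt u mod ?M)) (v @ par v @ c (wt v mod ?M))"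
        using uv by (intro hdist_le_hdist_append) simp
      finally show ?thesis .
    next
      case False
      have "2 * td + 1 \<le> hdist (u @ par u) (v @ par v)"
        using uv by (intro par_dist) auto
      moreover have "2 * (tf - td) \<le> hdist (c (wt u mod ?M)) (c (wt v mod ?M))"
        using False by (intro c_dist) auto
      ultimately show ?thesis
        using split[OF uv(1,2)] \<open>td \<le> tf\<close> by linarith
    qed
  qed
qed

theorem lemma9:
  fixes td tf k n :: nat and P :: "nat \<Rightarrow> nat \<Rightarrow> 'a::{finite, field}"
  assumes "td \<le> tf"
    and "k \<le> n"
    and "\<forall>u v. length u = k \<longrightarrow> length v = k \<longrightarrow> u \<noteq> v \<longrightarrow>
           2 * td + 1 \<le> hdist (sys_enc P k n u) (sys_enc P k n v)"
  shows "r_f (wt :: 'a list \<Rightarrow> nat) k td tf \<le> n - k + N_code TYPE('a) (2 * tf + 1) (2 * (tf - td))"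
proof -
  define par where "par u = map (\<lambda>j. \<Sum>i<k. u ! i * P i j) [0..<n - k]" for u :: "'a list"
  have sys_enc_eq: "sys_enc P k n u = u @ par u" for u
    by (simp add: sys_enc_def par_def)
  have par_dist: "2 * td + 1 \<le> hdist (u @ par u) (v @ par v)"
    if "length u = k" "length v = k" "u \<noteq> v" for u v
    using assms(3) that by (simp add: sys_enc_eq)
  obtain c :: "nat \<Rightarrow> 'a list"
    where "\<forall>i<2 * tf + 1. length (c i) = N_code TYPE('a) (2 * tf + 1) (2 * (tf - td))"
      and "\<forall>i<2 * tf + 1. \<forall>j<2 * tf + 1. i \<noteq> j \<longrightarrow> 2 * (tf - td) \<le> hdist (c i) (c j)"
    using N_code_attained by blast
  with \<open>td \<le> tf\<close> par_dist have "is_FCC wt k td tf (n - k + N_code TYPE('a) (2 * tf + 1) (2 * (tf - td)))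
      (\<lambda>u. par u @ c (wt u mod (2 * tf + 1)))"
    by (intro is_FCC_wt_append_code) (auto simp: par_def)
  thus ?thesis by (rule r_f_le)
qed

end
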